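(* Let $G$ be an infinite compact group and $\alpha$ an automorphism of $G$ such that $(G,\alpha)$ has finite depth. Let $V$ be an open subgroup of $G$ with $\bigcap_{k\in\mathbb{Z}}\alpha^k(V)=\{1\}$ and $V=V_+V_-$. Then the index $[\alpha(V_+):V_+]$ is strictly greater than $1$ and does not depend on the choice of the open subgroup $V$ with these two properties.
   Context: $V_+=\bigcap_{k\ge0}\alpha^k(V)$ and $V_-=\bigcap_{k\ge0}\alpha^{-k}(V)$. $(G,\alpha)$ has finite depth if there is an open subgroup $V\le G$ with $\bigcap_{k\in\mathbb{Z}}\alpha^k(V)=\{1\}$. *)

theory Defs
  imports "HOL-Analysis.Analysis" "HOL-Algebra.Algebra"
begin

definition topological_group :: "('a, 'b) monoid_scheme \<Rightarrow> 'a topology \<Rightarrow> bool" where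
  "topological_group G T \<longleftrightarrow> group G \<and> topspace T = carrier G
     \<and> continuous_map (prod_topology T T) T (\<lambda>(x, y). x \<otimes>\<^bsub>G\<^esub> y)
     \<and> continuous_map T T (\<lambda>x. inv\<^bsub>G\<^esub> x)"

definition aut_pow :: "('a, 'b) monoid_scheme \<Rightarrow> ('a \<Rightarrow> 'a) \<Rightarrow> int \<Rightarrow> 'a \<Rightarrow> 'a" where
  "aut_pow G \<alpha> k = (if 0 \<le> k then \<alpha> ^^ nat k else (inv_into (carrier G) \<alpha>) ^^ nat (- k))"

definition V_plus :: "('a, 'b) monoid_scheme \<Rightarrow> ('a \<Rightarrow> 'a) \<Rightarrow> 'a set \<Rightarrow> 'a set" where
  "V_plus G \<alpha> V = (\<Inter>k::nat. aut_pow G \<alpha> (int k) ` V)"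

definition V_minus :: "('a, 'b) monoid_scheme \<Rightarrow> ('a \<Rightarrow> 'a) \<Rightarrow> 'a set \<Rightarrow> 'a set" where
  "V_minus G \<alpha> V = (\<Inter>k::nat. aut_pow G \<alpha> (- int k) ` V)"

definition depth_subgroup :: "('a, 'b) monoid_scheme \<Rightarrow> 'a topology \<Rightarrow> ('a \<Rightarrow> 'a) \<Rightarrow> 'a set \<Rightarrow> bool" where
  "depth_subgroup G T \<alpha> V \<longleftrightarrow> subgroup V G \<and> openin T V
     \<and> (\<Inter>k::int. aut_pow G \<alpha> k ` V) = {\<one>\<^bsub>G\<^esub>}"

definition finite_depth :: "('a, 'b) monoid_scheme \<Rightarrow> 'a topology \<Rightarrow> ('a \<Rightarrow> 'a) \<Rightarrow> bool" where
  "finite_depth G T \<alpha> \<longleftrightarrow> (\<exists>V. depth_subgroup G T \<alpha> V)"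

text \<open>The index [alpha(V_+) : V_+] as the number of right cosets of V_+ contained in
alpha(V_+) (Isabelle's card: 0 if infinitely many).\<close>
definition plus_index :: "('a, 'b) monoid_scheme \<Rightarrow> ('a \<Rightarrow> 'a) \<Rightarrow> 'a set \<Rightarrow> nat" where
  "plus_index G \<alpha> V = card ((\<lambda>x. V_plus G \<alpha> V #>\<^bsub>G\<^esub> x) ` (\<alpha> ` V_plus G \<alpha> V))"

end

theory Submission
  imports Defs
begin

text \<open>
  Write \<open>V\<^sub>m = \<alpha>\<^sup>-\<^sup>m(V\<^sub>+) = {x. \<forall>k \<le> m. \<alpha>\<^sup>k x \<in> V}\<close>, a descending chain of subgroups.
  Since \<open>\<alpha>\<^sup>-\<^sup>m\<close> maps the step \<open>V\<^sub>-\<^sub>1 \<supseteq> V\<^sub>0\<close> onto \<open>V\<^sub>m\<^sub>-\<^sub>1 \<supseteq> V\<^sub>m\<close>, all steps have the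
  same index \<open>s = [\<alpha>(V\<^sub>+) : V\<^sub>+]\<close>, which is finite because \<open>V\<^sub>-\<^sub>1 \<inter> V = V\<^sub>0\<close> and the open
  subgroup \<open>V\<close> has finite index in the compact group; so \<open>[V\<^sub>m\<^sub>-\<^sub>j : V\<^sub>m] = s\<^sup>j\<close>.

  Independence: the translates \<open>\<alpha>\<^sup>k(V)\<close> are closed with intersection \<open>{1}\<close>, so by
  compactness every open subgroup \<open>W\<close> contains \<open>\<Inter>\<^bsub>|k| \<le> N\<^esub> \<alpha>\<^sup>k(V)\<close> for some \<open>N\<close>. This
  shifts the chain of \<open>V\<close> into that of \<open>W\<close> with bounded offset, giving \<open>s\<^sub>W\<^sup>j \<le> s\<^sub>V\<^sup>j\<^sup>+\<^sup>c\<close> for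
  all \<open>j\<close>, hence \<open>s\<^sub>W \<le> s\<^sub>V\<close> and, by symmetry, equality. (This part does not need
  \<open>V = V\<^sub>+V\<^sub>-\<close>.)

  Non-triviality: if \<open>s = 1\<close> the chain is constant, so \<open>V\<^sub>+ \<subseteq> \<Inter>\<^sub>k \<alpha>\<^sup>k(V) = {1}\<close>. Then
  \<open>V = V\<^sub>+V\<^sub>- = V\<^sub>-\<close> satisfies \<open>\<alpha>(V) \<subseteq> V\<close>; as \<open>V\<close> and \<open>\<alpha>(V)\<close> have the same finite index in
  \<open>G\<close>, \<open>\<alpha>(V) = V\<close>, whence \<open>V = V\<^sub>+ = {1}\<close> and \<open>G\<close> would be finite.
\<close>

section \<open>Relative indices of subgroups\<close>

context group
begin

text \<open>For \<open>H \<subseteq> K\<close>, \<open>card (rcosets_in H K)\<close> is the index \<open>[K : H]\<close> (\<open>0\<close> if infinite).\<close>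
definition rcosets_in :: "'a set \<Rightarrow> 'a set \<Rightarrow> 'a set set" where
  "rcosets_in H K = (\<lambda>x. H #> x) ` K"

lemma rcosets_in_carrier: "rcosets_in H (carrier G) = rcosets H"
  by (auto simp: rcosets_in_def RCOSETS_def)

lemma rcosets_in_mono: "K' \<subseteq> K \<Longrightarrow> rcosets_in H K' \<subseteq> rcosets_in H K"
  unfolding rcosets_in_def by (rule image_mono)

lemma rcosets_in_subset_rcosets: "K \<subseteq> carrier G \<Longrightarrow> rcosets_in H K \<subseteq> rcosets H"
  using rcosets_in_mono rcosets_in_carrier by metis

lemma rcosets_in_subset_Pow:
  assumes "H \<subseteq> carrier G" "K \<subseteq> carrier G"
  shows "rcosets_in H K \<subseteq> Pow (carrier G)"
  unfolding rcosets_in_def using r_coset_subset_G[OF assms(1)] assms(2) by blast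

lemma r_coset_eq_image: "H #> x = (\<lambda>h. h \<otimes> x) ` H"
  by (auto simp: r_coset_def)

lemma rcosets_in_self:
  assumes "subgroup H G"
  shows "rcosets_in H H = {H}"
proof -
  have "H #> x = H" if "x \<in> H" for x
    using coset_join2[OF subgroup.mem_carrier[OF assms that] assms that] .
  then show ?thesis
    using subgroup.one_closed[OF assms] by (auto simp: rcosets_in_def)
qed

lemma subset_if_card_rcosets_in_eq_1:
  assumes H: "subgroup H G" and "H \<subseteq> K" "K \<subseteq> carrier G" "card (rcosets_in H K) = 1"
  shows "K \<subseteq> H"
proof
  fix x assume x: "x \<in> K"
  have "\<one> \<in> K"
    using subgroup.one_closed[OF H] \<open>H \<subseteq> K\<close> by blast
  then have "H #> \<one> \<in> rcosets_in H K" "H #> x \<in> rcosets_in H K"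
    using x by (auto simp: rcosets_in_def)
  then have "H #> x = H #> \<one>"
    using \<open>card (rcosets_in H K) = 1\<close> by (auto simp: card_1_singleton_iff)
  then have "H #> x = H"
    using subgroup.subset[OF H] by simp
  then show "x \<in> H"
    using coset_join1 H x \<open>K \<subseteq> carrier G\<close> by blast
qed

lemma set_mult_subgroup_absorb:
  assumes "subgroup H G" "subgroup H' G" "H \<subseteq> H'"
  shows "H' <#> H = H'"
proof
  show "H' <#> H \<subseteq> H'"
    using mono_set_mult[OF order_refl \<open>H \<subseteq> H'\<close>] subgroup_mult_id[OF assms(2)] by blast
  show "H' \<subseteq> H' <#> H"
  proof
    fix x assume "x \<in> H'"
    then have "x = x \<otimes> \<one>" "x \<in> H'" "\<one> \<in> H"
      using subgroup.mem_carrier[OF assms(2)] subgroup.one_closed[OF assms(1)] by auto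
    then show "x \<in> H' <#> H"
      unfolding set_mult_def by blast
  qed
qed

lemma rcosets_in_larger_subgroup:
  assumes H: "subgroup H G" and H': "subgroup H' G" and "H \<subseteq> H'" and K: "K \<subseteq> carrier G"
  shows "rcosets_in H' K = (\<lambda>S. H' <#> S) ` rcosets_in H K"
proof -
  have "H' #> x = H' <#> (H #> x)" if "x \<in> K" for x
    using setmult_rcos_assoc[of H' H x] set_mult_subgroup_absorb[OF assms(1-3)]
      subgroup.subset[OF H] subgroup.subset[OF H'] that K by auto
  then show ?thesis
    unfolding rcosets_in_def image_image by (intro image_cong) auto
qed

lemma UN_rcosets_subgroup:
  assumes "subgroup K G" "subgroup L G" "K \<subseteq> L"
  shows "(\<Union>x\<in>L. K #> x) = L"
proof
  show "(\<Union>x\<in>L. K #> x) \<subseteq> L"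
    using subgroup.m_closed[OF assms(2)] assms(3) by (auto simp: r_coset_def)
  show "L \<subseteq> (\<Union>x\<in>L. K #> x)"
    using rcos_self[OF subgroup.mem_carrier[OF assms(2)] assms(1)] by blast
qed

lemma bij_betw_rcos_rcosets_in:
  assumes H: "H \<subseteq> carrier G" and K: "K \<subseteq> carrier G" and x: "x \<in> carrier G"
  shows "bij_betw (\<lambda>S. S #> x) (rcosets_in H K) (rcosets_in H (K #> x))"
proof -
  have "(H #> k) #> x = H #> (k \<otimes> x)" if "k \<in> K" for k
    using coset_mult_assoc[OF H, of k x] that K x by auto
  then have image: "rcosets_in H (K #> x) = (\<lambda>S. S #> x) ` rcosets_in H K"
    unfolding rcosets_in_def r_coset_eq_image[of K x] image_image by (intro image_cong) auto
  have "(S #> x) #> inv x = S" if "S \<in> rcosets_in H K" for S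
    using coset_mult_assoc[of S x "inv x"] rcosets_in_subset_Pow[OF H K] that x by auto
  then have "inj_on (\<lambda>S. S #> x) (rcosets_in H K)"
    by (rule inj_on_inverseI)
  then show ?thesis
    using image by (simp add: bij_betw_def)
qed

lemma rcosets_in_disjoint_fibres:
  assumes H: "subgroup H G" and K: "subgroup K G" and "H \<subseteq> K" and L: "L \<subseteq> carrier G"
    and C: "C \<in> rcosets_in K L" and C': "C' \<in> rcosets_in K L" and "C \<noteq> C'"
  shows "rcosets_in H C \<inter> rcosets_in H C' = {}"
proof (rule ccontr)
  assume "rcosets_in H C \<inter> rcosets_in H C' \<noteq> {}"
  then obtain y y' where y: "y \<in> C" "y' \<in> C'" "H #> y = H #> y'"
    by (auto simp: rcosets_in_def)
  obtain x' where x': "x' \<in> L" "C' = K #> x'"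
    using C' by (auto simp: rcosets_in_def)
  have "C \<subseteq> carrier G" "C' \<subseteq> carrier G"
    using C C' rcosets_in_subset_Pow[OF subgroup.subset[OF K] L] by auto
  then have "y \<in> H #> y'"
    using rcos_self[OF _ H] y by auto
  then have "y \<in> K #> y'"
    using \<open>H \<subseteq> K\<close> by (auto simp: r_coset_def)
  also have "K #> y' = C'"
    using repr_independence[OF y(2)[unfolded x'(2)] _ K] x' L by auto
  finally have "\<not> disjnt C C'"
    using y(1) by (auto simp: disjnt_def)
  moreover have "C \<in> rcosets K" "C' \<in> rcosets K"
    using C C' rcosets_in_subset_rcosets[OF L] by auto
  ultimately show False
    using rcos_disjoint[OF K] \<open>C \<noteq> C'\<close> by (auto simp: pairwise_def)
qed

text \<open>The cosets of \<open>H\<close> in \<open>L\<close> fibre over those of \<open>K\<close>, and each fibre is a translate of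
  the cosets of \<open>H\<close> in \<open>K\<close>.\<close>
lemma card_rcosets_in_tower:
  assumes H: "subgroup H G" and K: "subgroup K G" and L: "subgroup L G"
    and "H \<subseteq> K" "K \<subseteq> L"
    and fin_KL: "finite (rcosets_in K L)" and fin_HK: "finite (rcosets_in H K)"
  shows "finite (rcosets_in H L)"
    and "card (rcosets_in H L) = card (rcosets_in K L) * card (rcosets_in H K)"
proof -
  have L_sub: "L \<subseteq> carrier G" and K_sub: "K \<subseteq> carrier G" and H_sub: "H \<subseteq> carrier G"
    using H K L subgroup.subset by auto
  have "rcosets_in H L = rcosets_in H (\<Union>x\<in>L. K #> x)"
    using UN_rcosets_subgroup[OF K L \<open>K \<subseteq> L\<close>] by simp
  then have fibres: "rcosets_in H L = (\<Union>C\<in>rcosets_in K L. rcosets_in H C)"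
    by (simp add: rcosets_in_def image_UN image_image)
  have fibre: "finite (rcosets_in H C) \<and> card (rcosets_in H C) = card (rcosets_in H K)"
    if C: "C \<in> rcosets_in K L" for C
  proof -
    obtain x where "x \<in> L" "C = K #> x"
      using C by (auto simp: rcosets_in_def)
    then show ?thesis
      using bij_betw_rcos_rcosets_in[OF H_sub K_sub, of x] L_sub fin_HK
      by (auto simp: bij_betw_finite bij_betw_same_card)
  qed
  show "finite (rcosets_in H L)"
    using fibres fin_KL fibre by simp
  have "card (rcosets_in H L) = (\<Sum>C\<in>rcosets_in K L. card (rcosets_in H C))"
    unfolding fibres
    by (rule card_UN_disjoint)
       (use fin_KL fibre rcosets_in_disjoint_fibres[OF H K \<open>H \<subseteq> K\<close> L_sub] in auto)
  then show "card (rcosets_in H L) = card (rcosets_in K L) * card (rcosets_in H K)"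
    using fibre by simp
qed

lemma finite_rcosets_in_Int:
  assumes K: "subgroup K G" and V: "subgroup V G" and fin: "finite (rcosets V)"
  shows "finite (rcosets_in (K \<inter> V) K)"
proof -
  have "(K \<inter> V) #> x = (V #> x) \<inter> K" if x: "x \<in> K" for x
  proof
    show "(K \<inter> V) #> x \<subseteq> (V #> x) \<inter> K"
      using x K by (auto simp: r_coset_def subgroup.m_closed)
    show "(V #> x) \<inter> K \<subseteq> (K \<inter> V) #> x"
    proof
      fix z assume z: "z \<in> (V #> x) \<inter> K"
      then obtain v where v: "v \<in> V" "z = v \<otimes> x"
        by (auto simp: r_coset_def)
      have "v = z \<otimes> inv x"
        using v x subgroup.mem_carrier[OF V] subgroup.mem_carrier[OF K] by (simp add: m_assoc)
      then have "v \<in> K"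
        using z x K by (simp add: subgroup.m_closed subgroup.m_inv_closed)
      then show "z \<in> (K \<inter> V) #> x"
        using v by (auto simp: r_coset_def)
    qed
  qed
  then have "rcosets_in (K \<inter> V) K = (\<lambda>S. S \<inter> K) ` rcosets_in V K"
    unfolding rcosets_in_def image_image by (intro image_cong) auto
  moreover have "finite (rcosets_in V K)"
    using rcosets_in_subset_rcosets[OF subgroup.subset[OF K]] fin finite_subset by blast
  ultimately show ?thesis
    by simp
qed

lemma finite_carrier_if_finite_rcosets:
  assumes "subgroup H G" "finite H" "finite (rcosets H)"
  shows "finite (carrier G)"
proof -
  have "finite (\<Union>(rcosets H))"
    by (intro finite_Union assms(3) rcosets_finite[OF _ subgroup.subset[OF assms(1)] assms(2)])
  then show ?thesis
    using rcosets_part_G[OF assms(1)] by simp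
qed

lemma bij_betw_iso_image_rcosets_in:
  assumes h: "h \<in> iso G G" and H: "H \<subseteq> carrier G" and K: "K \<subseteq> carrier G"
  shows "bij_betw ((`) h) (rcosets_in H K) (rcosets_in (h ` H) (h ` K))"
proof -
  have inj: "inj_on h (carrier G)"
    using h by (simp add: iso_def bij_betw_def)
  have "h ` (H #> x) = h ` H #> h x" if "x \<in> K" for x
  proof -
    have "h ` (H #> x) = (\<lambda>y. h y \<otimes> h x) ` H"
      unfolding r_coset_eq_image image_image
      using that H K hom_mult[OF iso_imp_homomorphism[OF h]] by (intro image_cong) auto
    then show ?thesis
      by (simp add: r_coset_eq_image image_image)
  qed
  then have "rcosets_in (h ` H) (h ` K) = (`) h ` rcosets_in H K"
    unfolding rcosets_in_def image_image by (intro image_cong) auto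
  moreover have "\<Union>(rcosets_in H K) \<subseteq> carrier G"
    using rcosets_in_subset_Pow[OF H K] by blast
  then have "inj_on ((`) h) (rcosets_in H K)"
    by (rule inj_on_image[OF inj_on_subset[OF inj]])
  ultimately show ?thesis
    by (simp add: bij_betw_def)
qed

end

section \<open>Integer powers of an automorphism\<close>

lemma funpow_iso: "f \<in> iso G G \<Longrightarrow> f ^^ n \<in> iso G G"
proof (induction n)
  case 0
  then show ?case by (simp add: iso_set_refl)
next
  case (Suc n)
  from Suc.IH[OF Suc.prems] Suc.prems show ?case
    unfolding funpow.simps(2) by (rule iso_set_trans)
qed

locale group_aut = group G for G (structure) +
  fixes \<alpha> :: "'a \<Rightarrow> 'a"
  assumes aut: "\<alpha> \<in> iso G G"
begin

lemma alpha_inj: "inj_on \<alpha> (carrier G)"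
  using aut by (simp add: iso_def bij_betw_def)

lemma alpha_image_carrier: "\<alpha> ` carrier G = carrier G"
  using aut by (simp add: iso_def bij_betw_def)

lemma aut_pow_iso: "aut_pow G \<alpha> k \<in> iso G G"
  by (simp add: aut_pow_def funpow_iso aut iso_set_sym)

lemma aut_pow_hom: "group_hom G G (aut_pow G \<alpha> k)"
  using aut_pow_iso by (simp add: group_hom_def group_hom_axioms_def is_group iso_imp_homomorphism)

lemma aut_pow_closed: "x \<in> carrier G \<Longrightarrow> aut_pow G \<alpha> k x \<in> carrier G"
  using group_hom.hom_closed[OF aut_pow_hom] .

lemma aut_pow_0 [simp]: "aut_pow G \<alpha> 0 = id"
  by (simp add: aut_pow_def)

lemma aut_pow_1: "aut_pow G \<alpha> 1 = \<alpha>"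
  by (simp add: aut_pow_def)

lemma aut_pow_succ:
  assumes x: "x \<in> carrier G"
  shows "aut_pow G \<alpha> (k + 1) x = \<alpha> (aut_pow G \<alpha> k x)"
proof -
  have inverse: "\<alpha> (inv_into (carrier G) \<alpha> y) = y" if "y \<in> carrier G" for y
    using f_inv_into_f[of y \<alpha> "carrier G"] alpha_image_carrier that by simp
  consider "0 \<le> k" | "k = -1" | "k < -1"
    by linarith
  then show ?thesis
  proof cases
    case 1
    then have "nat (k + 1) = Suc (nat k)" by simp
    with 1 show ?thesis by (simp add: aut_pow_def)
  next
    case 2
    then show ?thesis using x inverse by (simp add: aut_pow_def)
  next
    case 3
    define y where "y = aut_pow G \<alpha> (k + 1) x"
    have "nat (- k) = Suc (nat (- (k + 1)))"
      using 3 by simp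
    then have "aut_pow G \<alpha> k x = inv_into (carrier G) \<alpha> y"
      using 3 by (simp add: aut_pow_def y_def)
    then show ?thesis
      using inverse aut_pow_closed[OF x, of "k + 1"] by (simp add: y_def)
  qed
qed

lemma aut_pow_add:
  assumes x: "x \<in> carrier G"
  shows "aut_pow G \<alpha> i (aut_pow G \<alpha> k x) = aut_pow G \<alpha> (i + k) x"
proof (induction i rule: int_induct[where k = 0])
  case base
  then show ?case by simp
next
  case (step1 i)
  then show ?case
    using aut_pow_succ[of "aut_pow G \<alpha> k x" i] aut_pow_succ[OF x, of "i + k"] x
    by (simp add: aut_pow_closed algebra_simps)
next
  case (step2 i)
  have "\<alpha> (aut_pow G \<alpha> (i - 1) (aut_pow G \<alpha> k x)) = \<alpha> (aut_pow G \<alpha> (i - 1 + k) x)"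
    using aut_pow_succ[of "aut_pow G \<alpha> k x" "i - 1"] aut_pow_succ[OF x, of "i - 1 + k"] step2 x
    by (simp add: aut_pow_closed algebra_simps)
  then show ?case
    using inj_onD[OF alpha_inj] x by (simp add: aut_pow_closed)
qed

lemma image_aut_pow:
  assumes "S \<subseteq> carrier G"
  shows "aut_pow G \<alpha> k ` S = {x \<in> carrier G. aut_pow G \<alpha> (- k) x \<in> S}"
proof
  show "aut_pow G \<alpha> k ` S \<subseteq> {x \<in> carrier G. aut_pow G \<alpha> (- k) x \<in> S}"
  proof
    fix y assume "y \<in> aut_pow G \<alpha> k ` S"
    then obtain x where "x \<in> S" "y = aut_pow G \<alpha> k x"
      by blast
    moreover have "aut_pow G \<alpha> (- k) (aut_pow G \<alpha> k x) = x"
      using aut_pow_add[of x "- k" k] \<open>x \<in> S\<close> assms by auto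
    ultimately show "y \<in> {x \<in> carrier G. aut_pow G \<alpha> (- k) x \<in> S}"
      using assms aut_pow_closed by auto
  qed
  show "{x \<in> carrier G. aut_pow G \<alpha> (- k) x \<in> S} \<subseteq> aut_pow G \<alpha> k ` S"
  proof
    fix x assume "x \<in> {x \<in> carrier G. aut_pow G \<alpha> (- k) x \<in> S}"
    then have "x = aut_pow G \<alpha> k (aut_pow G \<alpha> (- k) x)" "aut_pow G \<alpha> (- k) x \<in> S"
      by (auto simp: aut_pow_add)
    then show "x \<in> aut_pow G \<alpha> k ` S"
      by blast
  qed
qed

lemma Inter_image_aut_pow:
  assumes "V \<subseteq> carrier G"
  shows "(\<Inter>k. aut_pow G \<alpha> k ` V) = {x \<in> carrier G. \<forall>k. aut_pow G \<alpha> k x \<in> V}"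
proof -
  have "(\<forall>k. P (- k)) \<longleftrightarrow> (\<forall>k. P k)" for P :: "int \<Rightarrow> bool"
    by (metis minus_minus)
  from this[of "\<lambda>k. aut_pow G \<alpha> k _ \<in> V"] show ?thesis
    unfolding image_aut_pow[OF assms] by auto
qed

lemma image_aut_pow_succ:
  assumes "S \<subseteq> carrier G"
  shows "aut_pow G \<alpha> (k + 1) ` S = \<alpha> ` aut_pow G \<alpha> k ` S"
  unfolding image_image using aut_pow_succ assms by (intro image_cong) auto

lemma V_plus_eq_self:
  assumes "V \<subseteq> carrier G" "\<alpha> ` V = V"
  shows "V_plus G \<alpha> V = V"
proof -
  have "aut_pow G \<alpha> (int n) ` V = V" for n
  proof (induction n)
    case 0
    then show ?case by simp
  next
    case (Suc n)
    then show ?case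
      using image_aut_pow_succ[OF assms(1), of "int n"] assms(2) by (simp add: add.commute)
  qed
  then show ?thesis
    by (simp add: V_plus_def)
qed

lemma alpha_image_V_minus_subset:
  assumes "V \<subseteq> carrier G"
  shows "\<alpha> ` V_minus G \<alpha> V \<subseteq> V_minus G \<alpha> V"
proof -
  have V_minus: "V_minus G \<alpha> V = {x \<in> carrier G. \<forall>n::nat. aut_pow G \<alpha> (int n) x \<in> V}"
    using image_aut_pow[OF assms] by (auto simp: V_minus_def)
  show ?thesis
  proof
    fix y assume "y \<in> \<alpha> ` V_minus G \<alpha> V"
    then obtain x where x: "x \<in> V_minus G \<alpha> V" "y = \<alpha> x"
      by blast
    then have "x \<in> carrier G"
      unfolding V_minus by blast
    have "aut_pow G \<alpha> (int n) y \<in> V" for n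
    proof -
      have "aut_pow G \<alpha> (int n) y = aut_pow G \<alpha> (int (Suc n)) x"
        using aut_pow_add[OF \<open>x \<in> carrier G\<close>, of "int n" 1] x(2)
        by (simp add: aut_pow_1 add.commute)
      also have "\<dots> \<in> V"
        using x(1) unfolding V_minus by blast
      finally show ?thesis .
    qed
    moreover have "y \<in> carrier G"
      using x(2) \<open>x \<in> carrier G\<close> alpha_image_carrier by blast
    ultimately show "y \<in> V_minus G \<alpha> V"
      unfolding V_minus by simp
  qed
qed

lemma image_eq_if_image_subset_finite_rcosets:
  assumes H: "subgroup H G" and fin: "finite (rcosets H)" and "\<alpha> ` H \<subseteq> H"
  shows "\<alpha> ` H = H"
proof -
  have H_sub: "H \<subseteq> carrier G"
    using subgroup.subset[OF H] .
  have \<alpha>H: "subgroup (\<alpha> ` H) G"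
    using group_hom.subgroup_img_is_subgroup[OF _ H] aut_pow_hom[of 1] by (simp add: aut_pow_1)
  have "bij_betw ((`) \<alpha>) (rcosets H) (rcosets (\<alpha> ` H))"
    using bij_betw_iso_image_rcosets_in[OF aut H_sub order_refl]
    by (simp add: rcosets_in_carrier alpha_image_carrier)
  then have fin_\<alpha>H: "finite (rcosets (\<alpha> ` H))"
    and card_\<alpha>H: "card (rcosets (\<alpha> ` H)) = card (rcosets H)"
    using fin by (auto simp: bij_betw_finite bij_betw_same_card)
  have "finite (rcosets_in (\<alpha> ` H) H)"
    using rcosets_in_subset_rcosets[OF H_sub] fin_\<alpha>H finite_subset by blast
  then have "card (rcosets (\<alpha> ` H)) = card (rcosets H) * card (rcosets_in (\<alpha> ` H) H)"
    using card_rcosets_in_tower(2)[OF \<alpha>H H subgroup_self \<open>\<alpha> ` H \<subseteq> H\<close> H_sub] fin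
    by (simp add: rcosets_in_carrier)
  moreover have "rcosets H \<noteq> {}"
    using H_sub by (auto simp: RCOSETS_def)
  ultimately have "card (rcosets_in (\<alpha> ` H) H) = 1"
    using card_\<alpha>H fin by simp
  then have "H \<subseteq> \<alpha> ` H"
    by (rule subset_if_card_rcosets_in_eq_1[OF \<alpha>H \<open>\<alpha> ` H \<subseteq> H\<close> H_sub])
  then show ?thesis
    using \<open>\<alpha> ` H \<subseteq> H\<close> by blast
qed

text \<open>\<open>V_plus_shift V m\<close> is \<open>\<alpha>\<^sup>-\<^sup>m(V\<^sub>+)\<close>.\<close>
definition V_plus_shift :: "'a set \<Rightarrow> int \<Rightarrow> 'a set" where
  "V_plus_shift V m = {x \<in> carrier G. \<forall>k \<le> m. aut_pow G \<alpha> k x \<in> V}"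

lemma V_plus_shift_subset_carrier: "V_plus_shift V m \<subseteq> carrier G"
  by (auto simp: V_plus_shift_def)

lemma V_plus_shift_antimono: "m \<le> m' \<Longrightarrow> V_plus_shift V m' \<subseteq> V_plus_shift V m"
  by (auto simp: V_plus_shift_def)

lemma V_plus_shift_subgroup:
  assumes "subgroup V G"
  shows "subgroup (V_plus_shift V m) G"
proof (rule subgroup.intro)
  note hom = group_hom.hom_mult[OF aut_pow_hom] group_hom.hom_one[OF aut_pow_hom]
    group_hom.hom_inv[OF aut_pow_hom]
  show "x \<otimes> y \<in> V_plus_shift V m" if "x \<in> V_plus_shift V m" "y \<in> V_plus_shift V m" for x y
    using that subgroup.m_closed[OF assms] by (simp add: V_plus_shift_def hom)
  show "\<one> \<in> V_plus_shift V m"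
    using subgroup.one_closed[OF assms] by (simp add: V_plus_shift_def hom)
  show "inv x \<in> V_plus_shift V m" if "x \<in> V_plus_shift V m" for x
    using that subgroup.m_inv_closed[OF assms] by (simp add: V_plus_shift_def hom)
qed (rule V_plus_shift_subset_carrier)

lemma image_aut_pow_V_plus_shift:
  "aut_pow G \<alpha> k ` V_plus_shift V m = V_plus_shift V (m - k)"
proof -
  have "(\<forall>j \<le> m. P (j - k)) \<longleftrightarrow> (\<forall>i \<le> m - k. P i)" for P :: "int \<Rightarrow> bool"
  proof
    assume P: "\<forall>j \<le> m. P (j - k)"
    show "\<forall>i \<le> m - k. P i"
    proof (intro allI impI)
      fix i assume "i \<le> m - k"
      then have "i + k \<le> m"
        by linarith
      then have "P (i + k - k)"
        using P by blast
      then show "P i"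
        by simp
    qed
  qed simp
  from this[of "\<lambda>i. aut_pow G \<alpha> i _ \<in> V"] show ?thesis
    unfolding image_aut_pow[OF V_plus_shift_subset_carrier]
    by (auto simp: V_plus_shift_def aut_pow_closed aut_pow_add)
qed

lemma V_plus_eq_V_plus_shift_0:
  assumes "V \<subseteq> carrier G"
  shows "V_plus G \<alpha> V = V_plus_shift V 0"
proof -
  have "(\<forall>n::nat. P (- int n)) \<longleftrightarrow> (\<forall>k \<le> 0. P k)" for P :: "int \<Rightarrow> bool"
  proof
    assume P: "\<forall>n::nat. P (- int n)"
    show "\<forall>k \<le> 0. P k"
    proof (intro allI impI)
      fix k :: int assume "k \<le> 0"
      then have "k = - int (nat (- k))"
        by simp
      then show "P k"
        using P by metis
    qed
  qed simp
  from this[of "\<lambda>k. aut_pow G \<alpha> k _ \<in> V"] show ?thesis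
    unfolding V_plus_def image_aut_pow[OF assms] V_plus_shift_def by auto
qed

lemma V_plus_shift_0_eq_Int: "V_plus_shift V 0 = V_plus_shift V (- 1) \<inter> V"
proof -
  have "(k \<le> 0) \<longleftrightarrow> (k \<le> - 1 \<or> k = 0)" for k :: int
    by linarith
  then show ?thesis
    by (auto simp: V_plus_shift_def)
qed

lemma plus_index_eq_card_rcosets_in:
  assumes "V \<subseteq> carrier G"
  shows "plus_index G \<alpha> V = card (rcosets_in (V_plus_shift V 0) (V_plus_shift V (- 1)))"
  using image_aut_pow_V_plus_shift[of 1 V 0]
  by (simp add: plus_index_def rcosets_in_def V_plus_eq_V_plus_shift_0[OF assms] aut_pow_1)

lemma V_plus_shift_subset_if_band_subset:
  assumes band: "\<forall>x\<in>carrier G. (\<forall>k. \<bar>k\<bar> \<le> int N \<longrightarrow> aut_pow G \<alpha> k x \<in> V) \<longrightarrow> x \<in> W"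
  shows "V_plus_shift V m \<subseteq> V_plus_shift W (m - int N)"
proof
  fix x assume x: "x \<in> V_plus_shift V m"
  then have x_carrier: "x \<in> carrier G"
    by (simp add: V_plus_shift_def)
  have "aut_pow G \<alpha> k x \<in> W" if "k \<le> m - int N" for k
  proof -
    have "aut_pow G \<alpha> i (aut_pow G \<alpha> k x) \<in> V" if "\<bar>i\<bar> \<le> int N" for i
      using x that \<open>k \<le> m - int N\<close> x_carrier by (simp add: aut_pow_add V_plus_shift_def)
    then show ?thesis
      using band aut_pow_closed[OF x_carrier] by blast
  qed
  then show "x \<in> V_plus_shift W (m - int N)"
    using x_carrier by (simp add: V_plus_shift_def)
qed

end

section \<open>Compact groups with an automorphism\<close>

lemma compact_space_finite_Inter_closed_subset:
  assumes T: "compact_space T" and W: "openin T W"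
    and C: "\<And>i. i \<in> I \<Longrightarrow> closedin T (C i)"
    and sub: "topspace T \<inter> (\<Inter>i\<in>I. C i) \<subseteq> W"
  shows "\<exists>J. finite J \<and> J \<subseteq> I \<and> topspace T \<inter> (\<Inter>i\<in>J. C i) \<subseteq> W"
proof -
  let ?U = "insert W ((\<lambda>i. topspace T - C i) ` I)"
  have "\<forall>U\<in>?U. openin T U"
    using W C by (auto simp: closedin_def)
  moreover have "topspace T \<subseteq> \<Union>?U"
    using sub by auto
  ultimately obtain F where F: "finite F" "F \<subseteq> ?U" "topspace T \<subseteq> \<Union>F"
    using T unfolding compact_space_alt by meson
  moreover have "F - {W} \<subseteq> (\<lambda>i. topspace T - C i) ` I"
    using F(2) by blast
  ultimately obtain J where J: "finite J" "J \<subseteq> I" "F - {W} = (\<lambda>i. topspace T - C i) ` J"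
    using finite_subset_image[of "F - {W}"] by (metis finite_Diff)
  have "topspace T \<inter> (\<Inter>i\<in>J. C i) \<subseteq> W"
  proof
    fix x assume x: "x \<in> topspace T \<inter> (\<Inter>i\<in>J. C i)"
    then obtain D where "D \<in> F" "x \<in> D"
      using F(3) by blast
    moreover have "D \<notin> F - {W}"
      using x J(3) \<open>x \<in> D\<close> by auto
    ultimately show "x \<in> W"
      by blast
  qed
  with J show ?thesis
    by blast
qed

lemma nat_le_if_pow_le_pow_add:
  fixes a b c :: nat
  assumes "0 < b" and le: "\<And>j. a ^ j \<le> b ^ (c + j)"
  shows "a \<le> b"
proof (rule ccontr)
  assume "\<not> a \<le> b"
  then have "1 < real a / real b"
    using \<open>0 < b\<close> by simp
  then obtain j where "real (b ^ c) < (real a / real b) ^ j"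
    using real_arch_pow by blast
  then have "real (b ^ (c + j)) < real (a ^ j)"
    using \<open>0 < b\<close> by (simp add: power_add power_divide field_simps)
  with le[of j] show False
    by linarith
qed

locale compact_group_aut = group_aut G \<alpha> for G (structure) and \<alpha> +
  fixes T :: "'a topology"
  assumes topological_group: "topological_group G T"
    and compact: "compact_space T"
    and homeomorphic: "homeomorphic_map T T \<alpha>"
begin

lemma topspace_eq: "topspace T = carrier G"
  using topological_group by (simp add: topological_group_def)

lemma continuous_map_mult_right:
  assumes "c \<in> carrier G"
  shows "continuous_map T T (\<lambda>x. x \<otimes> c)"
proof -
  have "continuous_map T (prod_topology T T) (\<lambda>x. (x, c))"
    using assms by (simp add: continuous_map_paired topspace_eq)
  moreover have "continuous_map (prod_topology T T) T (\<lambda>(x, y). x \<otimes> y)"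
    using topological_group by (simp add: topological_group_def)
  ultimately show ?thesis
    using continuous_map_compose by (fastforce simp: o_def)
qed

lemma openin_rcos:
  assumes V: "subgroup V G" "openin T V" and c: "c \<in> carrier G"
  shows "openin T (V #> c)"
proof -
  have "V #> c = {x \<in> topspace T. x \<otimes> inv c \<in> V}"
  proof
    show "V #> c \<subseteq> {x \<in> topspace T. x \<otimes> inv c \<in> V}"
      using V c by (auto simp: r_coset_def topspace_eq m_assoc subgroup.mem_carrier)
    show "{x \<in> topspace T. x \<otimes> inv c \<in> V} \<subseteq> V #> c"
    proof
      fix x assume x: "x \<in> {x \<in> topspace T. x \<otimes> inv c \<in> V}"
      then have "x = (x \<otimes> inv c) \<otimes> c"
        using c by (simp add: topspace_eq m_assoc)
      then show "x \<in> V #> c"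
        using x unfolding r_coset_def by blast
    qed
  qed
  then show ?thesis
    using openin_continuous_map_preimage[OF continuous_map_mult_right[of "inv c"] V(2)] c by simp
qed

lemma closedin_open_subgroup:
  assumes V: "subgroup V G" "openin T V"
  shows "closedin T V"
proof -
  have V_rcos: "V \<in> rcosets V"
    using subgroup.subgroup_in_rcosets[OF V(1) is_group] .
  have "topspace T - V = \<Union>(rcosets V - {V})"
  proof
    show "topspace T - V \<subseteq> \<Union>(rcosets V - {V})"
    proof
      fix x assume x: "x \<in> topspace T - V"
      then have "x \<in> V #> x" "V #> x \<in> rcosets V"
        using rcos_self[OF _ V(1)] rcosetsI[OF subgroup.subset[OF V(1)]] by (auto simp: topspace_eq)
      moreover have "V #> x \<noteq> V"
        using x \<open>x \<in> V #> x\<close> by auto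
      ultimately show "x \<in> \<Union>(rcosets V - {V})"
        by blast
    qed
    show "\<Union>(rcosets V - {V}) \<subseteq> topspace T - V"
      using rcos_disjoint[OF V(1)] V_rcos rcosets_part_G[OF V(1)]
      by (fastforce simp: topspace_eq pairwise_def disjnt_def)
  qed
  moreover have "openin T (\<Union>(rcosets V - {V}))"
    using openin_rcos[OF V] by (auto simp: RCOSETS_def)
  ultimately show ?thesis
    using subgroup.subset[OF V(1)] by (simp add: closedin_def topspace_eq)
qed

lemma finite_rcosets_open_subgroup:
  assumes V: "subgroup V G" "openin T V"
  shows "finite (rcosets V)"
proof -
  have "\<forall>C\<in>rcosets V. openin T C" "topspace T \<subseteq> \<Union>(rcosets V)"
    using openin_rcos[OF V] rcosets_part_G[OF V(1)] by (auto simp: RCOSETS_def topspace_eq)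
  then obtain F where F: "finite F" "F \<subseteq> rcosets V" "topspace T \<subseteq> \<Union>F"
    using compact unfolding compact_space_alt by meson
  have "rcosets V \<subseteq> F"
  proof
    fix C assume C: "C \<in> rcosets V"
    then obtain x where "x \<in> C"
      using subgroup.rcosets_non_empty[OF V(1)] by blast
    moreover have "C \<subseteq> topspace T"
      using C rcosets_part_G[OF V(1)] topspace_eq by blast
    ultimately obtain D where "D \<in> F" "x \<in> D"
      using F(3) by blast
    then have "D \<in> rcosets V" "C \<inter> D \<noteq> {}"
      using F(2) \<open>x \<in> C\<close> by auto
    then have "C = D"
      using rcos_disjoint[OF V(1)] C by (auto simp: pairwise_def disjnt_def)
    then show "C \<in> F"
      using \<open>D \<in> F\<close> by simp
  qed
  then show ?thesis
    using F(1) finite_subset by blast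
qed

lemma homeomorphic_map_aut_pow: "homeomorphic_map T T (aut_pow G \<alpha> k)"
proof -
  obtain g where g: "homeomorphic_maps T T \<alpha> g"
    using homeomorphic homeomorphic_map_maps by blast
  have "g y = inv_into (carrier G) \<alpha> y" if "y \<in> topspace T" for y
  proof -
    have "g y \<in> carrier G" "\<alpha> (g y) = y"
      using g that by (auto simp: homeomorphic_maps_def continuous_map_def topspace_eq)
    then show ?thesis
      using inv_into_f_f[OF alpha_inj] by metis
  qed
  then have "homeomorphic_maps T T \<alpha> (inv_into (carrier G) \<alpha>)"
    using homeomorphic_maps_eq[OF g] by blast
  then have inverse: "homeomorphic_map T T (inv_into (carrier G) \<alpha>)"
    using homeomorphic_maps_sym homeomorphic_maps_imp_map by blast
  have funpow: "homeomorphic_map T T (f ^^ n)" if f: "homeomorphic_map T T f" for f n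
  proof (induction n)
    case 0
    show ?case
      unfolding funpow.simps(1) by (rule homeomorphic_map_id[THEN iffD2, OF refl])
  next
    case (Suc n)
    show ?case
      unfolding funpow.simps(2) by (rule homeomorphic_map_compose[OF Suc.IH f])
  qed
  show ?thesis
    by (simp add: aut_pow_def funpow homeomorphic inverse)
qed

lemma closedin_image_aut_pow: "closedin T V \<Longrightarrow> closedin T (aut_pow G \<alpha> k ` V)"
  using homeomorphic_imp_closed_map[OF homeomorphic_map_aut_pow] by (simp add: closed_map_def)

lemma depth_subgroup_band_subset:
  assumes V: "depth_subgroup G T \<alpha> V" and W: "subgroup W G" "openin T W"
  shows "\<exists>N::nat. \<forall>x\<in>carrier G. (\<forall>k. \<bar>k\<bar> \<le> int N \<longrightarrow> aut_pow G \<alpha> k x \<in> V) \<longrightarrow> x \<in> W"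
proof -
  have V_open: "subgroup V G" "openin T V" and trivial: "(\<Inter>k. aut_pow G \<alpha> k ` V) = {\<one>}"
    using V by (auto simp: depth_subgroup_def)
  have "closedin T (aut_pow G \<alpha> k ` V)" for k
    by (rule closedin_image_aut_pow[OF closedin_open_subgroup[OF V_open]])
  moreover have "topspace T \<inter> (\<Inter>k\<in>UNIV. aut_pow G \<alpha> k ` V) \<subseteq> W"
    using trivial subgroup.one_closed[OF W(1)] by auto
  ultimately obtain J where J: "finite J" "topspace T \<inter> (\<Inter>k\<in>J. aut_pow G \<alpha> k ` V) \<subseteq> W"
    using compact_space_finite_Inter_closed_subset[OF compact W(2)] by meson
  define N where "N = nat (\<Sum>k\<in>J. \<bar>k\<bar>)"
  have N: "\<bar>k\<bar> \<le> int N" if "k \<in> J" for k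
    using member_le_sum[of k J abs] J(1) that by (simp add: N_def sum_nonneg)
  have "x \<in> W"
    if x: "x \<in> carrier G" and band: "\<forall>k. \<bar>k\<bar> \<le> int N \<longrightarrow> aut_pow G \<alpha> k x \<in> V" for x
  proof -
    have "x \<in> aut_pow G \<alpha> k ` V" if "k \<in> J" for k
      using band N[OF that] x image_aut_pow[OF subgroup.subset[OF V_open(1)], of k] by simp
    then show ?thesis
      using J(2) x by (auto simp: topspace_eq)
  qed
  then show ?thesis
    by blast
qed

subsection \<open>The scale\<close>

lemma rcosets_in_V_plus_shift_step:
  assumes V: "subgroup V G" "openin T V"
  shows "finite (rcosets_in (V_plus_shift V m) (V_plus_shift V (m - 1)))"
    and "card (rcosets_in (V_plus_shift V m) (V_plus_shift V (m - 1))) = plus_index G \<alpha> V"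
proof -
  have "bij_betw ((`) (aut_pow G \<alpha> (- m)))
      (rcosets_in (V_plus_shift V 0) (V_plus_shift V (- 1)))
      (rcosets_in (aut_pow G \<alpha> (- m) ` V_plus_shift V 0) (aut_pow G \<alpha> (- m) ` V_plus_shift V (- 1)))"
    by (rule bij_betw_iso_image_rcosets_in[OF aut_pow_iso V_plus_shift_subset_carrier
        V_plus_shift_subset_carrier])
  then have "bij_betw ((`) (aut_pow G \<alpha> (- m)))
      (rcosets_in (V_plus_shift V 0) (V_plus_shift V (- 1)))
      (rcosets_in (V_plus_shift V m) (V_plus_shift V (m - 1)))"
    by (simp add: image_aut_pow_V_plus_shift)
  moreover have "finite (rcosets_in (V_plus_shift V 0) (V_plus_shift V (- 1)))"
    using finite_rcosets_in_Int[OF V_plus_shift_subgroup[OF V(1)] V(1)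
        finite_rcosets_open_subgroup[OF V]]
    by (simp add: V_plus_shift_0_eq_Int)
  ultimately show "finite (rcosets_in (V_plus_shift V m) (V_plus_shift V (m - 1)))"
    and "card (rcosets_in (V_plus_shift V m) (V_plus_shift V (m - 1))) = plus_index G \<alpha> V"
    using plus_index_eq_card_rcosets_in[OF subgroup.subset[OF V(1)]]
    by (auto simp: bij_betw_finite bij_betw_same_card)
qed

lemma rcosets_in_V_plus_shift_power:
  assumes V: "subgroup V G" "openin T V"
  shows "finite (rcosets_in (V_plus_shift V m) (V_plus_shift V (m - int j)))
    \<and> card (rcosets_in (V_plus_shift V m) (V_plus_shift V (m - int j))) = plus_index G \<alpha> V ^ j"
proof (induction j)
  case 0
  then show ?case
    using rcosets_in_self[OF V_plus_shift_subgroup[OF V(1)]] by simp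
next
  case (Suc j)
  have e: "m - int (Suc j) = m - int j - 1"
    by simp
  note step = rcosets_in_V_plus_shift_step[OF V, of "m - int j"]
  have "V_plus_shift V m \<subseteq> V_plus_shift V (m - int j)"
    "V_plus_shift V (m - int j) \<subseteq> V_plus_shift V (m - int j - 1)"
    by (simp_all add: V_plus_shift_antimono)
  note tower = card_rcosets_in_tower[OF V_plus_shift_subgroup[OF V(1)]
      V_plus_shift_subgroup[OF V(1)] V_plus_shift_subgroup[OF V(1)] this step(1)]
  show ?case
    unfolding e using tower step(2) Suc.IH by simp
qed

lemma plus_index_pos:
  assumes V: "subgroup V G" "openin T V"
  shows "0 < plus_index G \<alpha> V"
proof -
  have "\<one> \<in> V_plus_shift V (- 1)"
    using subgroup.one_closed[OF V_plus_shift_subgroup[OF V(1)]] .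
  then have "V_plus_shift V 0 #> \<one> \<in> rcosets_in (V_plus_shift V 0) (V_plus_shift V (- 1))"
    by (auto simp: rcosets_in_def)
  then have "0 < card (rcosets_in (V_plus_shift V 0) (V_plus_shift V (- 1)))"
    using rcosets_in_V_plus_shift_step(1)[OF V, of 0] by (auto simp: card_gt_0_iff)
  then show ?thesis
    using rcosets_in_V_plus_shift_step(2)[OF V, of 0] by simp
qed

lemma plus_index_le:
  assumes dV: "depth_subgroup G T \<alpha> V" and dW: "depth_subgroup G T \<alpha> W"
  shows "plus_index G \<alpha> W \<le> plus_index G \<alpha> V"
proof -
  have V: "subgroup V G" "openin T V" and W: "subgroup W G" "openin T W"
    using dV dW by (auto simp: depth_subgroup_def)
  obtain N where N: "\<forall>x\<in>carrier G. (\<forall>k. \<bar>k\<bar> \<le> int N \<longrightarrow> aut_pow G \<alpha> k x \<in> V) \<longrightarrow> x \<in> W"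
    using depth_subgroup_band_subset[OF dV W] by blast
  obtain M where M: "\<forall>x\<in>carrier G. (\<forall>k. \<bar>k\<bar> \<le> int M \<longrightarrow> aut_pow G \<alpha> k x \<in> W) \<longrightarrow> x \<in> V"
    using depth_subgroup_band_subset[OF dW V] by blast
  have "plus_index G \<alpha> W ^ j \<le> plus_index G \<alpha> V ^ (N + M + j)" for j
  proof -
    let ?VW = "rcosets_in (V_plus_shift V 0) (V_plus_shift W (- int N - int j))"
    have "- int N - int j - int M = 0 - int (N + M + j)"
      by simp
    then have sub: "?VW \<subseteq> rcosets_in (V_plus_shift V 0) (V_plus_shift V (0 - int (N + M + j)))"
      using rcosets_in_mono V_plus_shift_subset_if_band_subset[OF M, of "- int N - int j"] by metis
    note power = rcosets_in_V_plus_shift_power[OF V, of 0 "N + M + j"]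
    have fin: "finite ?VW"
      using finite_subset[OF sub] power by blast
    have le_V: "card ?VW \<le> plus_index G \<alpha> V ^ (N + M + j)"
      using card_mono[OF _ sub] power by metis
    have "V_plus_shift V 0 \<subseteq> V_plus_shift W (- int N)"
      using V_plus_shift_subset_if_band_subset[OF N, of 0] by simp
    then have "card (rcosets_in (V_plus_shift W (- int N)) (V_plus_shift W (- int N - int j)))
        \<le> card ?VW"
      using rcosets_in_larger_subgroup[OF V_plus_shift_subgroup[OF V(1)]
          V_plus_shift_subgroup[OF W(1)] _ V_plus_shift_subset_carrier] fin
      by (simp add: card_image_le)
    then show ?thesis
      using rcosets_in_V_plus_shift_power[OF W, of "- int N" j] le_V by simp
  qed
  then show ?thesis
    using nat_le_if_pow_le_pow_add plus_index_pos[OF V] by blast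
qed

lemma V_plus_trivial_if_plus_index_eq_1:
  assumes dV: "depth_subgroup G T \<alpha> V" and index: "plus_index G \<alpha> V = 1"
  shows "V_plus G \<alpha> V \<subseteq> {\<one>}"
proof -
  have V: "subgroup V G" "openin T V" and trivial: "(\<Inter>k. aut_pow G \<alpha> k ` V) = {\<one>}"
    using dV by (auto simp: depth_subgroup_def)
  have step: "V_plus_shift V (m - 1) \<subseteq> V_plus_shift V m" for m
    using subset_if_card_rcosets_in_eq_1[OF V_plus_shift_subgroup[OF V(1)]
        V_plus_shift_antimono V_plus_shift_subset_carrier] rcosets_in_V_plus_shift_step(2)[OF V, of m]
      index by simp
  have up: "V_plus_shift V 0 \<subseteq> V_plus_shift V (int n)" for n
  proof (induction n)
    case 0
    then show ?case by simp
  next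
    case (Suc n)
    then show ?case
      using step[of "1 + int n"] by simp
  qed
  have "V_plus_shift V 0 \<subseteq> {x \<in> carrier G. \<forall>k. aut_pow G \<alpha> k x \<in> V}"
  proof (intro subsetI CollectI conjI allI)
    fix x k assume x: "x \<in> V_plus_shift V 0"
    then show "x \<in> carrier G"
      by (simp add: V_plus_shift_def)
    have "x \<in> V_plus_shift V (int (nat k))"
      using up x by blast
    then show "aut_pow G \<alpha> k x \<in> V"
      by (simp add: V_plus_shift_def)
  qed
  then show ?thesis
    using trivial Inter_image_aut_pow[OF subgroup.subset[OF V(1)]]
      V_plus_eq_V_plus_shift_0[OF subgroup.subset[OF V(1)]] by simp
qed

lemma one_less_plus_index:
  assumes dV: "depth_subgroup G T \<alpha> V" and factor: "V = V_plus G \<alpha> V <#> V_minus G \<alpha> V"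
    and infinite: "infinite (carrier G)"
  shows "1 < plus_index G \<alpha> V"
proof (rule ccontr)
  assume "\<not> 1 < plus_index G \<alpha> V"
  have V: "subgroup V G" "openin T V"
    using dV by (auto simp: depth_subgroup_def)
  have V_sub: "V \<subseteq> carrier G"
    using subgroup.subset[OF V(1)] .
  have "plus_index G \<alpha> V = 1"
    using plus_index_pos[OF V] \<open>\<not> 1 < plus_index G \<alpha> V\<close> by simp
  then have V_plus: "V_plus G \<alpha> V \<subseteq> {\<one>}"
    by (rule V_plus_trivial_if_plus_index_eq_1[OF dV])
  have V_minus_sub: "V_minus G \<alpha> V \<subseteq> V"
    using INT_lower[of 0 UNIV "\<lambda>k. aut_pow G \<alpha> (- int k) ` V"] by (simp add: V_minus_def)
  have "V \<subseteq> {\<one>} <#> V_minus G \<alpha> V"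
    using factor mono_set_mult[OF V_plus order_refl] by blast
  then have "V = V_minus G \<alpha> V"
    using lcos_mult_one V_minus_sub V_sub by (auto simp: l_coset_eq_set_mult)
  then have "\<alpha> ` V \<subseteq> V"
    using alpha_image_V_minus_subset[OF V_sub] by simp
  then have "\<alpha> ` V = V"
    by (rule image_eq_if_image_subset_finite_rcosets[OF V(1) finite_rcosets_open_subgroup[OF V]])
  then have "finite V"
    using V_plus V_plus_eq_self[OF V_sub] finite_subset by fastforce
  then show False
    using finite_carrier_if_finite_rcosets[OF V(1) _ finite_rcosets_open_subgroup[OF V]] infinite
    by blast
qed

end

theorem proposition5p5:
  fixes G :: "('a, 'b) monoid_scheme" and T :: "'a topology" and \<alpha> :: "'a \<Rightarrow> 'a"
  assumes "group G"
    and "topological_group G T"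
    and "compact_space T"
    and "Hausdorff_space T"
    and "infinite (carrier G)"
    and "\<alpha> \<in> iso G G"
    and "homeomorphic_map T T \<alpha>"
    and "finite_depth G T \<alpha>"
  shows "(\<forall>V. depth_subgroup G T \<alpha> V \<and> V = V_plus G \<alpha> V <#>\<^bsub>G\<^esub> V_minus G \<alpha> V
             \<longrightarrow> 1 < plus_index G \<alpha> V)
       \<and> (\<forall>V W. depth_subgroup G T \<alpha> V \<and> V = V_plus G \<alpha> V <#>\<^bsub>G\<^esub> V_minus G \<alpha> V
             \<and> depth_subgroup G T \<alpha> W \<and> W = V_plus G \<alpha> W <#>\<^bsub>G\<^esub> V_minus G \<alpha> W
             \<longrightarrow> plus_index G \<alpha> V = plus_index G \<alpha> W)"
proof -
  interpret compact_group_aut G \<alpha> T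
    by (intro compact_group_aut.intro group_aut.intro group_aut_axioms.intro
        compact_group_aut_axioms.intro) (use assms in auto)
  show ?thesis
    using one_less_plus_index plus_index_le assms(5) by (auto intro: antisym)
qed

end
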